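(* Let $n$ be a positive integer, $f:\mathbb{Z}_n\to\mathbb C$, $1\le m\le n$ an integer, and $M=\{0,1,\dots,m-1\}\subseteq\mathbb{Z}_n$. Then \[\sum_{a\in\mathbb{Z}_n}\sum_{b\in\mathbb{Z}_n}|f(a+bM)|^2\ge\sum_{r\in\mathbb{Z}_n}|\widehat f(r)|^2\cdot\max\left(\frac{m^2\gcd(r,n)}{n},\,m\right).\]
   Context: The Fourier transform of $f:\mathbb{Z}_n\to\mathbb C$ is $\widehat f(s)=\sum_{x\in\mathbb{Z}_n}f(x)e^{-2\pi i xs/n}$. For $a,b\in\mathbb{Z}_n$, $a+bM$ denotes the multiset $\{a+bx: x\in M\}$ and $f(a+bM)=\sum_{x\in M}f(a+bx)$ (counted with multiplicity). For $r\in\mathbb{Z}_n$, $\gcd(r,n)$ is the gcd of $n$ with any integer representative of $r$ (so $\gcd(0,n)=n$). *)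

theory Defs
  imports "HOL-Analysis.Analysis"
begin

text \<open>Z_n is represented by the residues {0..<n} (n > 0); arithmetic is taken mod n.
  A function f : Z_n -> C is a function nat => complex of which only the values on {0..<n} matter.\<close>

definition dft :: "nat \<Rightarrow> (nat \<Rightarrow> complex) \<Rightarrow> nat \<Rightarrow> complex" where
  "dft n f s = (\<Sum>x<n. f x * cis (- 2 * pi * real x * real s / real n))"

definition dilate_sum :: "nat \<Rightarrow> (nat \<Rightarrow> complex) \<Rightarrow> nat \<Rightarrow> nat \<Rightarrow> nat \<Rightarrow> complex" where
  "dilate_sum n f m a b = (\<Sum>x<m. f ((a + b * x) mod n))"

end

theory Submission imports Defs "HOL-Library.Real_Mod" begin

text \<open>For fixed b, the map a \<mapsto> f(a + bM) is a sum of m translates of f, so its Fourier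
  coefficient at r is the one of f times the exponential sum over x < m of e(bxr/n). Parseval
  in a, followed by orthogonality of characters in b, turns the left-hand side into the sum over
  r of |hat f(r)|^2 C(r), where C(r) counts the pairs x, y < m with n | r(x - y).
  The diagonal gives C(r) \<ge> m; and n | r(x - y) already holds when x \<equiv> y mod n/gcd(r,n),
  so Cauchy-Schwarz over these n/gcd(r,n) residue classes gives C(r) \<ge> m^2 gcd(r,n)/n.\<close>

definition unity_root :: "nat \<Rightarrow> int \<Rightarrow> complex" where
  "unity_root n k = cis (2 * pi * of_int k / real n)"

lemma unity_root_0 [simp]: "unity_root n 0 = 1"
  unfolding unity_root_def by simp

lemma unity_root_add: "unity_root n (a + b) = unity_root n a * unity_root n b"
  unfolding unity_root_def by (simp add: cis_mult add_divide_distrib distrib_left)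

lemma unity_root_uminus: "unity_root n (- a) = cnj (unity_root n a)"
  unfolding unity_root_def by (simp add: cis_cnj)

lemma unity_root_pow: "unity_root n k ^ r = unity_root n (int r * k)"
  unfolding unity_root_def Complex.DeMoivre by (simp add: field_simps)

lemma unity_root_periodic:
  assumes "0 < n"
  shows "unity_root n (a + int n * j) = unity_root n a"
proof -
  have "unity_root n (int n * j) = cis (2 * pi * of_int j)"
    unfolding unity_root_def using assms by (simp add: field_simps)
  also have "\<dots> = 1"
    by (simp add: cos_int_2pin sin_int_2pin cis.ctr complex_eq_iff)
  finally show ?thesis by (simp add: unity_root_add)
qed

lemma unity_root_eq_1_iff:
  assumes "0 < n"
  shows "unity_root n k = 1 \<longleftrightarrow> int n dvd k"
proof
  assume "unity_root n k = 1"
  then obtain j where "2 * pi * of_int k / real n = of_int j * (2 * pi)"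
    unfolding unity_root_def cis_eq_1_iff by auto
  then have "real_of_int k = of_int (j * int n)"
    using assms by (simp add: field_simps)
  then show "int n dvd k"
    by (metis dvd_triv_right of_int_eq_iff)
next
  assume "int n dvd k"
  then show "unity_root n k = 1"
    using unity_root_periodic[OF assms, of 0] by auto
qed

lemma sum_unity_root:
  assumes "0 < n"
  shows "(\<Sum>r<n. unity_root n (int r * k)) = (if int n dvd k then of_nat n else 0)"
proof (cases "int n dvd k")
  case True
  then have "unity_root n (int r * k) = 1" for r
    by (simp add: unity_root_eq_1_iff[OF assms])
  then show ?thesis
    using True by simp
next
  case False
  have "unity_root n k ^ n = 1"
    using assms by (simp add: unity_root_pow unity_root_eq_1_iff)
  then have "(\<Sum>r<n. unity_root n k ^ r) = 0"
    using False unity_root_eq_1_iff[OF assms] by (simp add: sum_gp_strict)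
  then show ?thesis
    using False by (simp add: unity_root_pow)
qed

lemma dft_conv_unity_root: "dft n h s = (\<Sum>x<n. h x * unity_root n (- (int x * int s)))"
  unfolding dft_def unity_root_def by (simp add: field_simps)

lemma int_dvd_diff_iff_eq:
  assumes "u < n" "v < n"
  shows "int n dvd int v - int u \<longleftrightarrow> u = v"
  using assms by (metis mod_eq_dvd_iff mod_less of_nat_eq_iff of_nat_mod)

lemma parseval:
  assumes n: "0 < n"
  shows "(\<Sum>r<n. (cmod (dft n h r))\<^sup>2) = real n * (\<Sum>u<n. (cmod (h u))\<^sup>2)"
proof -
  have norm_sq: "complex_of_real ((cmod (dft n h r))\<^sup>2) =
      (\<Sum>u<n. \<Sum>v<n. h u * cnj (h v) * unity_root n (int r * (int v - int u)))" for r
  proof -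
    have "complex_of_real ((cmod (dft n h r))\<^sup>2) =
        (\<Sum>u<n. h u * unity_root n (- (int u * int r))) *
        (\<Sum>v<n. cnj (h v) * unity_root n (int v * int r))"
      unfolding complex_norm_square dft_conv_unity_root by (simp add: unity_root_uminus)
    also have "\<dots> = (\<Sum>u<n. \<Sum>v<n. h u * cnj (h v) * unity_root n (int r * (int v - int u)))"
      unfolding sum_product
      by (intro sum.cong refl) (simp add: unity_root_add[symmetric] algebra_simps)
    finally show ?thesis .
  qed
  have "complex_of_real (\<Sum>r<n. (cmod (dft n h r))\<^sup>2) =
      (\<Sum>u<n. \<Sum>v<n. h u * cnj (h v) * (\<Sum>r<n. unity_root n (int r * (int v - int u))))"
    unfolding of_real_sum norm_sq sum_distrib_left
    by (subst sum.swap, rule sum.cong[OF refl], rule sum.swap)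
  also have "\<dots> = (\<Sum>u<n. h u * cnj (h u) * of_nat n)"
    by (simp add: sum_unity_root[OF n] int_dvd_diff_iff_eq if_distrib cong: if_cong)
  also have "\<dots> = complex_of_real (real n * (\<Sum>u<n. (cmod (h u))\<^sup>2))"
    unfolding of_real_mult of_real_sum complex_norm_square by (simp add: sum_distrib_left ac_simps)
  finally show ?thesis by (simp only: of_real_eq_iff)
qed

lemma bij_betw_add_mod: "0 < (n::nat) \<Longrightarrow> bij_betw (\<lambda>a. (a + c) mod n) {..<n} {..<n}"
proof -
  assume n: "0 < n"
  have inj: "inj_on (\<lambda>a. (a + c) mod n) {..<n}"
  proof (rule inj_onI)
    fix x y :: nat
    assume "x \<in> {..<n}" "y \<in> {..<n}" "(x + c) mod n = (y + c) mod n"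
    then have "int (x + c) mod int n = int (y + c) mod int n" "x < n" "y < n"
      by (simp_all only: of_nat_mod[symmetric] lessThan_iff)
    then have "int n dvd int (y + c) - int (x + c)" "x < n" "y < n"
      using mod_eq_dvd_iff by metis+
    then show "x = y"
      using int_dvd_diff_iff_eq by simp
  qed
  moreover have "(\<lambda>a. (a + c) mod n) ` {..<n} = {..<n}"
    by (rule endo_inj_surj[OF finite_lessThan _ inj]) (use n in auto)
  ultimately show ?thesis
    by (simp add: bij_betw_def)
qed

lemma dft_translate:
  assumes n: "0 < n"
  shows "dft n (\<lambda>a. h ((a + c) mod n)) r = unity_root n (int c * int r) * dft n h r"
proof -
  have "unity_root n (int c * int r) * dft n h r
      = (\<Sum>u<n. h u * unity_root n (int c * int r - int u * int r))"
    unfolding dft_conv_unity_root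
    by (simp add: sum_distrib_left unity_root_add[symmetric] ac_simps)
  also have "\<dots> = (\<Sum>a<n. h ((a + c) mod n) *
      unity_root n (int c * int r - int ((a + c) mod n) * int r))"
    by (rule sum.reindex_bij_betw[OF bij_betw_add_mod[OF n], symmetric])
  also have "\<dots> = dft n (\<lambda>a. h ((a + c) mod n)) r"
    unfolding dft_conv_unity_root
  proof (intro sum.cong refl)
    fix a
    have "int (a + c) * int r = (int n * int ((a + c) div n) + int ((a + c) mod n)) * int r"
      by (metis div_mult_mod_eq of_nat_add of_nat_mult mult.commute)
    then have "int c * int r - int ((a + c) mod n) * int r =
        - (int a * int r) + int n * (int ((a + c) div n) * int r)"
      by (simp add: algebra_simps)
    then have "unity_root n (int c * int r - int ((a + c) mod n) * int r) =
        unity_root n (- (int a * int r))"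
      using unity_root_periodic[OF n] by presburger
    then show "h ((a + c) mod n) * unity_root n (int c * int r - int ((a + c) mod n) * int r) =
        h ((a + c) mod n) * unity_root n (- (int a * int r))"
      by simp
  qed
  finally show ?thesis ..
qed

lemma dft_dilate_sum:
  assumes n: "0 < n"
  shows "dft n (\<lambda>a. dilate_sum n f m a b) r =
    dft n f r * (\<Sum>x<m. unity_root n (int b * int x * int r))"
proof -
  have "dft n (\<lambda>a. dilate_sum n f m a b) r = (\<Sum>x<m. dft n (\<lambda>a. f ((a + b * x) mod n)) r)"
    unfolding dft_def dilate_sum_def sum_distrib_right by (rule sum.swap)
  also have "\<dots> = dft n f r * (\<Sum>x<m. unity_root n (int b * int x * int r))"
    by (simp add: dft_translate[OF n] sum_distrib_left ac_simps)
  finally show ?thesis .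
qed

definition collision_count :: "nat \<Rightarrow> nat \<Rightarrow> nat \<Rightarrow> real" where
  "collision_count n m r = (\<Sum>x<m. \<Sum>y<m. of_bool (int n dvd int r * (int x - int y)))"

lemma sum_cmod_exp_sum_sq:
  assumes n: "0 < n"
  shows "(\<Sum>b<n. (cmod (\<Sum>x<m. unity_root n (int b * int x * int r)))\<^sup>2) =
    real n * collision_count n m r"
proof -
  have norm_sq: "complex_of_real ((cmod (\<Sum>x<m. unity_root n (int b * int x * int r)))\<^sup>2) =
      (\<Sum>x<m. \<Sum>y<m. unity_root n (int b * (int r * (int x - int y))))" for b
    unfolding complex_norm_square cnj_sum sum_product
    by (intro sum.cong refl) (simp add: unity_root_uminus[symmetric] unity_root_add[symmetric] algebra_simps)
  have "complex_of_real (\<Sum>b<n. (cmod (\<Sum>x<m. unity_root n (int b * int x * int r)))\<^sup>2) =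
      (\<Sum>x<m. \<Sum>y<m. \<Sum>b<n. unity_root n (int b * (int r * (int x - int y))))"
    unfolding of_real_sum norm_sq
    by (subst sum.swap, rule sum.cong[OF refl], rule sum.swap)
  also have "\<dots> = complex_of_real (real n * collision_count n m r)"
    unfolding collision_count_def of_real_mult of_real_sum sum_distrib_left
    by (intro sum.cong refl) (simp add: sum_unity_root[OF n])
  finally show ?thesis by (simp only: of_real_eq_iff)
qed

lemma sum_dilate_sum_sq:
  assumes n: "0 < n"
  shows "(\<Sum>a<n. \<Sum>b<n. (cmod (dilate_sum n f m a b))\<^sup>2) =
    (\<Sum>r<n. (cmod (dft n f r))\<^sup>2 * collision_count n m r)"
proof -
  have "real n * (\<Sum>a<n. \<Sum>b<n. (cmod (dilate_sum n f m a b))\<^sup>2) =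
      (\<Sum>b<n. \<Sum>r<n. (cmod (dft n (\<lambda>a. dilate_sum n f m a b) r))\<^sup>2)"
    by (subst sum.swap) (simp add: sum_distrib_left parseval[OF n])
  also have "\<dots> = (\<Sum>r<n. (cmod (dft n f r))\<^sup>2 *
      (\<Sum>b<n. (cmod (\<Sum>x<m. unity_root n (int b * int x * int r)))\<^sup>2))"
    unfolding dft_dilate_sum[OF n] norm_mult power_mult_distrib
    by (subst sum.swap) (simp add: sum_distrib_left)
  also have "\<dots> = real n * (\<Sum>r<n. (cmod (dft n f r))\<^sup>2 * collision_count n m r)"
    unfolding sum_cmod_exp_sum_sq[OF n] by (simp add: sum_distrib_left ac_simps)
  finally show ?thesis
    using n by simp
qed

lemma collision_count_ge: "real m \<le> collision_count n m r"
proof -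
  have "real m = (\<Sum>x<m. of_bool (int n dvd int r * (int x - int x)))"
    by simp
  also have "\<dots> \<le> collision_count n m r"
    unfolding collision_count_def by (intro sum_mono member_le_sum) auto
  finally show ?thesis .
qed

lemma sq_le_count_mod_eq_pairs:
  assumes q: "0 < q"
  shows "real m ^ 2 \<le> real q * (\<Sum>x<m. \<Sum>y<m. of_bool (x mod q = y mod q))"
proof -
  define c where "c i = (\<Sum>x<m. of_bool (x mod q = i) :: real)" for i
  have "(\<Sum>i<q. c i) = (\<Sum>x<m. \<Sum>i<q. of_bool (x mod q = i) :: real)"
    unfolding c_def by (rule sum.swap)
  also have "\<dots> = real m"
    using q by (simp add: sum.delta)
  finally have sum_c: "(\<Sum>i<q. c i) = real m" .
  have "(\<Sum>i<q. (c i)\<^sup>2) =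
      (\<Sum>i<q. \<Sum>x<m. \<Sum>y<m. of_bool (x mod q = i) * of_bool (y mod q = i) :: real)"
    unfolding c_def power2_eq_square sum_product ..
  also have "\<dots> = (\<Sum>x<m. \<Sum>y<m. \<Sum>i<q. of_bool (x mod q = i) * of_bool (y mod q = i))"
    by (subst sum.swap) (rule sum.cong[OF refl], rule sum.swap)
  also have "\<dots> = (\<Sum>x<m. \<Sum>y<m. of_bool (x mod q = y mod q))"
    using q by (intro sum.cong refl) (simp add: sum.delta')
  finally have sum_c_sq: "(\<Sum>i<q. (c i)\<^sup>2) = (\<Sum>x<m. \<Sum>y<m. of_bool (x mod q = y mod q))" .
  have "(\<Sum>i<q. c i * 1)\<^sup>2 \<le> (\<Sum>i<q. (c i)\<^sup>2) * (\<Sum>i<q. 1\<^sup>2)"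
    by (rule Cauchy_Schwarz_ineq_sum)
  then show ?thesis
    using sum_c sum_c_sq by (simp add: mult.commute)
qed

lemma collision_count_ge_gcd:
  assumes n: "0 < n"
  shows "real m ^ 2 * real (gcd r n) / real n \<le> collision_count n m r"
proof -
  define d where "d = gcd r n"
  define q where "q = n div d"
  have n_eq: "n = d * q" and "0 < d"
    unfolding q_def d_def using n by simp_all
  then have q: "0 < q" using n by (cases q) auto
  have "int n dvd int r * (int x - int y)" if "x mod q = y mod q" for x y
  proof -
    have "int q dvd int x - int y"
      using that by (metis mod_eq_dvd_iff of_nat_mod)
    moreover have "int d dvd int r"
      unfolding d_def by simp
    ultimately show ?thesis
      unfolding n_eq of_nat_mult by (rule mult_dvd_mono[rotated])
  qed
  then have "(\<Sum>x<m. \<Sum>y<m. of_bool (x mod q = y mod q)) \<le> collision_count n m r"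
    unfolding collision_count_def by (intro sum_mono) auto
  then have "real m ^ 2 \<le> real q * collision_count n m r"
    using sq_le_count_mod_eq_pairs[OF q, of m] by (meson mult_left_mono of_nat_0_le_iff order_trans)
  then have "real m ^ 2 * real d \<le> real n * collision_count n m r"
    using \<open>0 < d\<close> unfolding n_eq by (simp add: mult_right_mono ac_simps)
  then show ?thesis
    using n unfolding d_def by (simp add: divide_le_eq mult.commute)
qed

theorem lemma4p2:
  fixes n m :: nat and f :: "nat \<Rightarrow> complex"
  assumes "0 < n" and "1 \<le> m" and "m \<le> n"
  shows "(\<Sum>a<n. \<Sum>b<n. (cmod (dilate_sum n f m a b))\<^sup>2)
         \<ge> (\<Sum>r<n. (cmod (dft n f r))\<^sup>2 *
               max (real m ^ 2 * real (gcd r n) / real n) (real m))"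
proof -
  have "max (real m ^ 2 * real (gcd r n) / real n) (real m) \<le> collision_count n m r" for r
    using collision_count_ge_gcd[OF assms(1)] collision_count_ge by simp
  then have "(\<Sum>r<n. (cmod (dft n f r))\<^sup>2 * max (real m ^ 2 * real (gcd r n) / real n) (real m))
      \<le> (\<Sum>r<n. (cmod (dft n f r))\<^sup>2 * collision_count n m r)"
    by (intro sum_mono mult_left_mono) auto
  then show ?thesis
    using sum_dilate_sum_sq[OF assms(1)] by simp
qed

end
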